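(* Let $M\ge1$, $N\ge1$, and let $v_1,\dots,v_N$ be nonzero complex numbers with $v_j^{-2}\neq\beta$ and pairwise distinct $v_j^2$. Then $$\sum_{\{n\}}(-\beta)^{\sum_{j=1}^{M-1}jn_j}\langle\{n\}|\Psi(\{v\}_N)\rangle=\frac{\prod_{j=1}^Nv_j^{N-1}(v_j^{-1}-\beta v_j)^{M+N-2}}{\prod_{1\le j<k\le N}(v_k^2-v_j^2)}\det_N V,$$ where the sum is over all tuples $\{n\}=(n_0,\dots,n_{M-1})$ of nonnegative integers with $\sum_kn_k=N$, and $V$ is the $N\times N$ matrix with entries $$V_{jk}=\sum_{m=0}^{j-1}(-1)^m(-\beta)^{j-N}\binom{M+N-1}{m}(1-\beta v_k^2)^{1-m+j-N}\quad(1\le j\le N-1),$$ $$V_{Nk}=-\sum_{m=\max(N-1,1)}^{M+N-1}(-1)^m\binom{M+N-1}{m}(1-\beta v_k^2)^{1-m}.$$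
   Context: Non-Hermitian phase model with parameter $\beta\ne0$. $\mathcal{F}$ is the Fock space with orthonormal basis $|n\rangle$ ($n\ge0$); $\phi|n\rangle=|n-1\rangle$, $\phi|0\rangle=0$, $\phi^\dagger|n\rangle=|n+1\rangle$, $\pi|n\rangle=\delta_{n,0}|n\rangle$. Sites $0,\dots,M-1$ carry $\mathcal{F}_0,\dots,\mathcal{F}_{M-1}$. With $W_a=\mathbb{C}^2$, $\mathcal{L}_{aj}(v)=\begin{pmatrix}v^{-1}-\beta v\pi_j&\phi_j^\dagger\\ \phi_j&v\end{pmatrix}$, $\mathcal{T}_a(v)=\mathcal{L}_{a,M-1}(v)\cdots\mathcal{L}_{a,0}(v)=\begin{pmatrix}\mathcal{A}&\mathcal{B}\\ \mathcal{C}&\mathcal{D}\end{pmatrix}(v)$. $|\Omega\rangle=\otimes_j|0\rangle_j$, $|\Psi(\{v\}_N)\rangle=\prod_{j=1}^N\mathcal{B}(v_j)|\Omega\rangle$, $|\{n\}\rangle=\otimes_{j=0}^{M-1}|n_j\rangle_j$, and $\langle\{n\}|$ is its dual. *)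

theory Defs
  imports Complex_Main "Jordan_Normal_Form.Determinant"
begin

text \<open>States of the tensor product of the Fock spaces at sites 0,1,2,...:
  a state is given by its coefficients with respect to the orthonormal basis
  vectors |{n}>, indexed by occupation functions n :: nat => nat.\<close>

type_synonym cstate = "(nat \<Rightarrow> nat) \<Rightarrow> complex"
type_synonym opr = "cstate \<Rightarrow> cstate"

definition vac :: cstate where
  "vac = (\<lambda>n. if n = (\<lambda>_. 0) then 1 else 0)"

definition phi_op :: "nat \<Rightarrow> opr" where
  "phi_op j = (\<lambda>\<psi> n. \<psi> (n(j := n j + 1)))"

definition phid_op :: "nat \<Rightarrow> opr" where
  "phid_op j = (\<lambda>\<psi> n. if 0 < n j then \<psi> (n(j := n j - 1)) else 0)"

definition pi_op :: "nat \<Rightarrow> opr" where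
  "pi_op j = (\<lambda>\<psi> n. if n j = 0 then \<psi> n else 0)"

text \<open>2x2 matrices (indices 0,1) with operator entries\<close>
type_synonym omat = "nat \<Rightarrow> nat \<Rightarrow> opr"

definition omat_mult :: "omat \<Rightarrow> omat \<Rightarrow> omat" where
  "omat_mult X Y = (\<lambda>a b \<psi> n. X a 0 (Y 0 b \<psi>) n + X a 1 (Y 1 b \<psi>) n)"

definition omat_id :: omat where
  "omat_id = (\<lambda>a b \<psi> n. if a = b then \<psi> n else 0)"

definition Lax :: "complex \<Rightarrow> complex \<Rightarrow> nat \<Rightarrow> omat" where
  "Lax \<beta> v j = (\<lambda>a b.
     if a = 0 \<and> b = 0 then (\<lambda>\<psi> n. inverse v * \<psi> n - \<beta> * v * pi_op j \<psi> n)
     else if a = 0 then phid_op j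
     else if b = 0 then phi_op j
     else (\<lambda>\<psi> n. v * \<psi> n))"

fun monodromy :: "complex \<Rightarrow> nat \<Rightarrow> complex \<Rightarrow> omat" where
  "monodromy \<beta> 0 v = omat_id"
| "monodromy \<beta> (Suc k) v = omat_mult (Lax \<beta> v k) (monodromy \<beta> k v)"

definition Bop :: "complex \<Rightarrow> nat \<Rightarrow> complex \<Rightarrow> opr" where
  "Bop \<beta> M v = monodromy \<beta> M v 0 1"

definition Psi :: "complex \<Rightarrow> nat \<Rightarrow> complex list \<Rightarrow> cstate" where
  "Psi \<beta> M vs = foldr (Bop \<beta> M) vs vac"

text \<open>configurations {n} = (n_0,...,n_{M-1}) with total occupation N
  (extended by zero beyond site M-1)\<close>
definition configs :: "nat \<Rightarrow> nat \<Rightarrow> (nat \<Rightarrow> nat) set" where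
  "configs M N = {n. (\<forall>j\<ge>M. n j = 0) \<and> (\<Sum>j<M. n j) = N}"

text \<open>the matrix V (0-based indices: row j0 = j-1, column k0 = k-1)\<close>
definition Vmat :: "complex \<Rightarrow> nat \<Rightarrow> nat \<Rightarrow> (nat \<Rightarrow> complex) \<Rightarrow> complex mat" where
  "Vmat \<beta> M N v = mat N N (\<lambda>(j0, k0).
     let j = j0 + 1; k = k0 + 1 in
     if j \<le> N - 1 then
       (\<Sum>m = 0..j - 1. (-1) ^ m * (-\<beta>) powi (int j - int N)
           * of_nat ((M + N - 1) choose m)
           * (1 - \<beta> * (v k)\<^sup>2) powi (1 - int m + int j - int N))
     else
       - (\<Sum>m = max (N - 1) 1..M + N - 1. (-1) ^ m
           * of_nat ((M + N - 1) choose m) * (1 - \<beta> * (v k)\<^sup>2) powi (1 - int m)))"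

end

theory Submission
  imports Defs
begin

text \<open>
  Let \<open>\<Phi>\<^sub>L\<close> be the dual product state with weight \<open>(-\<beta>)\<^bsup>j n\<^sub>j\<^esup>\<close> on the sites
  \<open>j < L\<close> and the vacuum on the sites \<open>j \<ge> L\<close>, so that the left-hand side is the pairing
  of \<open>\<Phi>\<^sub>M\<close> with the Bethe vector. Moving the operators \<open>B(v)\<close> one at a time onto the
  dual side, the transposed monodromy acts site by site, and
  \<open>B(v)\<^sup>T \<Phi>\<^sub>L = (\<Sum>i<L. (-\<beta> v)\<^sup>i b\<^bsup>M-1-i\<^esup> \<Phi>\<^bsub>L-i\<^esub>)\<close> with \<open>b = v\<^sup>-\<^sup>1 - \<beta> v\<close>.
  Iterating over the rapidities gives \<open>\<Prod>j. b\<^sub>j\<^bsup>M-1\<^esup>\<close> times the sum of the complete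
  homogeneous symmetric polynomials \<open>h\<^sub>q(\<sigma>\<^sub>1, \<dots>, \<sigma>\<^sub>N)\<close> of degree \<open>q < M\<close>, where
  \<open>\<sigma>\<^sub>j = -\<beta> v\<^sub>j / b\<^sub>j\<close>.

  On the other side, \<open>V\<close> is a lower triangular matrix times a Vandermonde matrix in the nodes
  \<open>y\<^sub>k = (1 - \<beta> v\<^sub>k\<^sup>2)\<^sup>-\<^sup>1 = 1 - \<sigma>\<^sub>k\<close> whose last row is a polynomial \<open>f\<close>. Such a
  determinant is a Vandermonde product times the divided difference \<open>f[y\<^sub>1, \<dots>, y\<^sub>N]\<close>.
  Up to terms of low degree, \<open>f\<close> is a geometric sum in \<open>1 - y\<close>, and the divided
  differences of the monomials \<open>(1 - y)\<^sup>i\<close> are again complete homogeneous polynomials in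
  the \<open>\<sigma>\<^sub>k\<close>, which produces the same sum.
\<close>

section \<open>Configurations and the pairing of dual states with states\<close>

lemma configs_zero: "configs M 0 = {\<lambda>_. 0}"
  by (auto simp: configs_def fun_eq_iff) (meson lessThan_iff not_le)

lemma finite_configs [simp]: "finite (configs M P)"
proof (rule finite_subset)
  show "configs M P \<subseteq> {m. \<forall>j. (j \<in> {..<M} \<longrightarrow> m j \<in> {..P}) \<and> (j \<notin> {..<M} \<longrightarrow> m j = 0)}"
    unfolding configs_def by (auto intro: order.trans[OF member_le_sum, of _ "{..<M}"])
qed (rule finite_set_of_finite_funs; simp)

lemma sum_lessThan_fun_upd:
  fixes m :: "nat \<Rightarrow> nat"
  assumes "k < M"
  shows "(\<Sum>j<M. (m(k := x)) j) + m k = (\<Sum>j<M. m j) + x"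
proof -
  have "(\<Sum>j<M. (m(k := x)) j) = x + (\<Sum>j\<in>{..<M} - {k}. m j)"
    using assms by (simp add: sum.remove[of _ k])
  moreover have "(\<Sum>j<M. m j) = m k + (\<Sum>j\<in>{..<M} - {k}. m j)"
    using assms by (simp add: sum.remove[of _ k])
  ultimately show ?thesis by simp
qed

lemma bij_betw_add_particle:
  assumes "k < M"
  shows "bij_betw (\<lambda>m. m(k := Suc (m k))) (configs M P) {m \<in> configs M (Suc P). 0 < m k}"
proof (rule bij_betw_byWitness[where f' = "\<lambda>m. m(k := m k - 1)"])
  have "(\<Sum>j<M. (m(k := Suc (m k))) j) = Suc (\<Sum>j<M. m j)" for m :: "nat \<Rightarrow> nat"
    using sum_lessThan_fun_upd[OF assms, of m "Suc (m k)"] by simp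
  then show "(\<lambda>m. m(k := Suc (m k))) ` configs M P \<subseteq> {m \<in> configs M (Suc P). 0 < m k}"
    using assms by (auto simp: configs_def)
  have "(\<Sum>j<M. (m(k := m k - 1)) j) = (\<Sum>j<M. m j) - 1" if "0 < m k" for m :: "nat \<Rightarrow> nat"
    using sum_lessThan_fun_upd[OF assms, of m "m k - 1"] that by simp
  then show "(\<lambda>m. m(k := m k - 1)) ` {m \<in> configs M (Suc P). 0 < m k} \<subseteq> configs M P"
    using assms by (auto simp: configs_def)
qed auto

definition pairing :: "nat \<Rightarrow> nat \<Rightarrow> cstate \<Rightarrow> cstate \<Rightarrow> complex" where
  "pairing M P w \<psi> = (\<Sum>n\<in>configs M P. w n * \<psi> n)"

lemma sum_configs_add_particle:
  assumes "k < M"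
  shows "(\<Sum>m\<in>configs M (Suc P). if 0 < m k then f m (m(k := m k - 1)) else 0)
       = (\<Sum>m\<in>configs M P. f (m(k := Suc (m k))) m)"
proof -
  have "(\<Sum>m\<in>configs M (Suc P). if 0 < m k then f m (m(k := m k - 1)) else 0)
      = (\<Sum>m\<in>{m \<in> configs M (Suc P). 0 < m k}. f m (m(k := m k - 1)))"
    by (simp only: sum.inter_filter finite_configs)
  also have "\<dots> = (\<Sum>m\<in>configs M P. f (m(k := Suc (m k))) m)"
    by (subst sum.reindex_bij_betw[OF bij_betw_add_particle[OF assms], symmetric]) simp
  finally show ?thesis .
qed

lemma pairing_phid_op:
  assumes "k < M"
  shows "pairing M (Suc P) w (phid_op k \<psi>) = pairing M P (phi_op k w) \<psi>"
proof -
  have "pairing M (Suc P) w (phid_op k \<psi>)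
      = (\<Sum>m\<in>configs M (Suc P). if 0 < m k then w m * \<psi> (m(k := m k - 1)) else 0)"
    unfolding pairing_def phid_op_def by (intro sum.cong) auto
  also have "\<dots> = (\<Sum>m\<in>configs M P. w (m(k := Suc (m k))) * \<psi> m)"
    by (rule sum_configs_add_particle[OF assms])
  finally show ?thesis by (simp add: pairing_def phi_op_def)
qed

lemma pairing_phi_op:
  assumes "k < M"
  shows "pairing M P w (phi_op k \<psi>) = pairing M (Suc P) (phid_op k w) \<psi>"
proof -
  have "pairing M (Suc P) (phid_op k w) \<psi>
      = (\<Sum>m\<in>configs M (Suc P). if 0 < m k then w (m(k := m k - 1)) * \<psi> m else 0)"
    unfolding pairing_def phid_op_def by (intro sum.cong) auto
  also have "\<dots> = (\<Sum>m\<in>configs M P. w m * \<psi> (m(k := Suc (m k))))"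
    by (rule sum_configs_add_particle[OF assms])
  finally show ?thesis by (simp add: pairing_def phi_op_def)
qed

lemma pairing_Lax_diag: "pairing M P w (Lax \<beta> v k a a \<psi>) = pairing M P (Lax \<beta> v k a a w) \<psi>"
  unfolding pairing_def Lax_def pi_op_def by (intro sum.cong) (auto simp: algebra_simps)

lemma pairing_add:
  "pairing M P w (\<lambda>n. \<psi> n + \<chi> n) = pairing M P w \<psi> + pairing M P w \<chi>"
  "pairing M P (\<lambda>n. w n + u n) \<psi> = pairing M P w \<psi> + pairing M P u \<psi>"
  unfolding pairing_def by (simp_all add: sum.distrib algebra_simps)

lemma pairing_sum_left:
  "pairing M P (\<lambda>m. \<Sum>i\<in>I. c i * w i m) \<psi> = (\<Sum>i\<in>I. c i * pairing M P (w i) \<psi>)"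
  unfolding pairing_def
  by (simp add: sum_distrib_left sum_distrib_right mult_ac sum.swap[of _ I])

section \<open>Transposed monodromy acting on product dual states\<close>

definition prod_state :: "(nat \<Rightarrow> nat \<Rightarrow> complex) \<Rightarrow> nat \<Rightarrow> cstate \<Rightarrow> cstate" where
  "prod_state \<omega> k R = (\<lambda>m. (\<Prod>j<k. \<omega> j (m j)) * R m)"

lemma Lax_diag_prod_state:
  "Lax \<beta> v k 0 0 (prod_state \<omega> (Suc k) R)
     = prod_state \<omega> k (\<lambda>m. (inverse v - \<beta> * v * (if m k = 0 then 1 else 0)) * \<omega> k (m k) * R m)"
  "Lax \<beta> v k 1 1 (prod_state \<omega> (Suc k) R) = prod_state \<omega> k (\<lambda>m. v * \<omega> k (m k) * R m)"
  by (auto simp: fun_eq_iff Lax_def pi_op_def prod_state_def algebra_simps)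

lemma phi_op_prod_state:
  assumes "\<And>m x. R (m(k := x)) = R m"
  shows "phi_op k (prod_state \<omega> (Suc k) R) = prod_state \<omega> k (\<lambda>m. \<omega> k (Suc (m k)) * R m)"
proof -
  have "(\<Prod>j<k. \<omega> j ((m(k := x)) j)) = (\<Prod>j<k. \<omega> j (m j))" for m x by (rule prod.cong) auto
  then show ?thesis by (auto simp: fun_eq_iff phi_op_def prod_state_def assms)
qed

lemma phid_op_prod_state:
  assumes "\<And>m x. R (m(k := x)) = R m"
  shows "phid_op k (prod_state \<omega> (Suc k) R)
    = prod_state \<omega> k (\<lambda>m. (if 0 < m k then \<omega> k (m k - 1) else 0) * R m)"
proof -
  have "(\<Prod>j<k. \<omega> j ((m(k := x)) j)) = (\<Prod>j<k. \<omega> j (m j))" for m x by (rule prod.cong) auto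
  then show ?thesis by (auto simp: fun_eq_iff phid_op_def prod_state_def assms)
qed

text \<open>The transposed Lax operators act site by site on product dual states, so the
  B and D entries of the transposed partial monodromy reduce to this scalar recursion.\<close>

fun dual_BD :: "complex \<Rightarrow> complex \<Rightarrow> (nat \<Rightarrow> nat \<Rightarrow> complex) \<Rightarrow> nat \<Rightarrow> (nat \<Rightarrow> nat) \<Rightarrow> complex \<times> complex" where
  "dual_BD \<beta> v \<omega> 0 n = (0, 1)"
| "dual_BD \<beta> v \<omega> (Suc k) n =
    ((inverse v - \<beta> * v * (if n k = 0 then 1 else 0)) * \<omega> k (n k) * fst (dual_BD \<beta> v \<omega> k n)
       + \<omega> k (Suc (n k)) * snd (dual_BD \<beta> v \<omega> k n),
     (if 0 < n k then \<omega> k (n k - 1) else 0) * fst (dual_BD \<beta> v \<omega> k n)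
       + v * \<omega> k (n k) * snd (dual_BD \<beta> v \<omega> k n))"

lemma Lax_off_diag [simp]: "Lax \<beta> v k 0 1 = phid_op k" "Lax \<beta> v k 1 0 = phi_op k"
  by (simp_all add: Lax_def)

lemma monodromy_Suc_apply:
  "monodromy \<beta> (Suc k) v a b \<psi>
     = (\<lambda>n. Lax \<beta> v k a 0 (monodromy \<beta> k v 0 b \<psi>) n + Lax \<beta> v k a 1 (monodromy \<beta> k v 1 b \<psi>) n)"
  by (simp add: omat_mult_def)

lemma pairing_monodromy_prod_state:
  assumes "k \<le> M" and "\<And>m m'. (\<And>j. k \<le> j \<Longrightarrow> m j = m' j) \<Longrightarrow> R m = R m'"
  shows "pairing M (Suc P) (prod_state \<omega> k R) (monodromy \<beta> k v 0 1 \<psi>)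
           = pairing M P (\<lambda>m. R m * fst (dual_BD \<beta> v \<omega> k m)) \<psi>
       \<and> pairing M P (prod_state \<omega> k R) (monodromy \<beta> k v 1 1 \<psi>)
           = pairing M P (\<lambda>m. R m * snd (dual_BD \<beta> v \<omega> k m)) \<psi>"
  using assms
proof (induction k arbitrary: P R \<psi>)
  case 0
  show ?case by (simp add: omat_id_def pairing_def prod_state_def)
next
  case (Suc k)
  have k: "k < M" using Suc.prems(1) by simp
  have R_upd: "R (m(k := x)) = R m" for m x by (rule Suc.prems(2)) simp
  have "Q (m k) * R m = Q (m' k) * R m'" if "\<And>j. k \<le> j \<Longrightarrow> m j = m' j" for Q m m'
    using that[of k] Suc.prems(2)[of m m'] that by simp
  then have IH: "pairing M (Suc P') (prod_state \<omega> k (\<lambda>m. Q (m k) * R m)) (monodromy \<beta> k v 0 1 \<psi>')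
             = pairing M P' (\<lambda>m. Q (m k) * R m * fst (dual_BD \<beta> v \<omega> k m)) \<psi>'"
    "pairing M P' (prod_state \<omega> k (\<lambda>m. Q (m k) * R m)) (monodromy \<beta> k v 1 1 \<psi>')
             = pairing M P' (\<lambda>m. Q (m k) * R m * snd (dual_BD \<beta> v \<omega> k m)) \<psi>'" for Q P' \<psi>'
    using Suc.IH[of "\<lambda>m. Q (m k) * R m"] k by auto
  have "pairing M (Suc P) (prod_state \<omega> (Suc k) R) (monodromy \<beta> (Suc k) v 0 1 \<psi>)
      = pairing M P (\<lambda>m. R m * fst (dual_BD \<beta> v \<omega> (Suc k) m)) \<psi>"
    unfolding monodromy_Suc_apply pairing_add Lax_off_diag pairing_Lax_diag pairing_phid_op[OF k]
      Lax_diag_prod_state phi_op_prod_state[OF R_upd]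
      IH[where Q = "\<lambda>x. (inverse v - \<beta> * v * (if x = 0 then 1 else 0)) * \<omega> k x"] IH[where Q = "\<lambda>x. \<omega> k (Suc x)"]
    by (simp add: pairing_add[symmetric] algebra_simps)
  moreover have "pairing M P (prod_state \<omega> (Suc k) R) (monodromy \<beta> (Suc k) v 1 1 \<psi>)
      = pairing M P (\<lambda>m. R m * snd (dual_BD \<beta> v \<omega> (Suc k) m)) \<psi>"
    unfolding monodromy_Suc_apply pairing_add Lax_off_diag pairing_Lax_diag pairing_phi_op[OF k]
      Lax_diag_prod_state phid_op_prod_state[OF R_upd]
      IH[where Q = "\<lambda>x. if 0 < x then \<omega> k (x - 1) else 0"] IH[where Q = "\<lambda>x. v * \<omega> k x"]
    by (simp add: pairing_add[symmetric] algebra_simps)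
  ultimately show ?case ..
qed

section \<open>The dual states \<open>\<Phi>\<^sub>L\<close>\<close>

definition weight :: "complex \<Rightarrow> nat \<Rightarrow> (nat \<Rightarrow> nat) \<Rightarrow> complex" where
  "weight \<beta> k n = (-\<beta>) ^ (\<Sum>j<k. j * n j)"

definition vacant :: "nat \<Rightarrow> nat \<Rightarrow> (nat \<Rightarrow> nat) \<Rightarrow> bool" where
  "vacant L k n \<longleftrightarrow> (\<forall>j. L \<le> j \<and> j < k \<longrightarrow> n j = 0)"

definition dual_weight :: "complex \<Rightarrow> nat \<Rightarrow> nat \<Rightarrow> nat \<Rightarrow> complex" where
  "dual_weight \<beta> L j x = (if j < L then (-\<beta>) ^ (j * x) else if x = 0 then 1 else 0)"

definition dual_state :: "complex \<Rightarrow> nat \<Rightarrow> nat \<Rightarrow> cstate" where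
  "dual_state \<beta> M L = (\<lambda>n. \<Prod>j<M. dual_weight \<beta> L j (n j))"

lemma dual_weight_below: "j < L \<Longrightarrow> dual_weight \<beta> L j x = (-\<beta>) ^ (j * x)"
  by (simp add: dual_weight_def)

lemma dual_weight_above: "L \<le> j \<Longrightarrow> dual_weight \<beta> L j x = (if x = 0 then 1 else 0)"
  by (simp add: dual_weight_def)

lemma weight_Suc: "weight \<beta> (Suc k) n = weight \<beta> k n * (-\<beta>) ^ (k * n k)"
  by (simp add: weight_def power_add)

lemma vacant_Suc: "L \<le> k \<Longrightarrow> vacant L (Suc k) n \<longleftrightarrow> vacant L k n \<and> n k = 0"
  by (auto simp: vacant_def less_Suc_eq)

lemma weight_vacant: "L \<le> k \<Longrightarrow> vacant L k n \<Longrightarrow> weight \<beta> k n = weight \<beta> L n"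
  by (induction k) (auto simp: le_Suc_eq vacant_Suc weight_Suc)

lemma dual_state_eq:
  "L \<le> M \<Longrightarrow> dual_state \<beta> M L n = (if vacant L M n then weight \<beta> M n else 0)"
proof (induction M)
  case (Suc M)
  show ?case
  proof (cases "L = Suc M")
    case True
    then show ?thesis by (simp add: dual_state_def weight_def power_sum dual_weight_def power_add vacant_def)
  next
    case False
    with Suc show ?thesis by (auto simp: dual_state_def vacant_Suc weight_Suc dual_weight_def)
  qed
qed (simp add: dual_state_def weight_def vacant_def)

fun top_site :: "nat \<Rightarrow> (nat \<Rightarrow> nat) \<Rightarrow> nat" where
  "top_site 0 n = 0"
| "top_site (Suc k) n = (if 0 < n k then k else top_site k n)"

lemma top_site_le: "top_site k n \<le> k"
  by (induction k) auto

lemma top_site_less_iff: "1 \<le> L \<Longrightarrow> top_site k n < L \<longleftrightarrow> vacant L k n"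
proof (induction k)
  case (Suc k)
  then show ?case
    by (cases "0 < n k") (auto simp: vacant_def less_Suc_eq, metis not_less not_less0)
qed (simp add: vacant_def)

lemma top_site_vacant: "L \<le> k \<Longrightarrow> vacant L k n \<Longrightarrow> top_site k n = top_site L n"
  by (induction k) (auto simp: le_Suc_eq vacant_Suc)

definition geom_sum :: "complex \<Rightarrow> complex \<Rightarrow> nat \<Rightarrow> complex" where
  "geom_sum a b m = (\<Sum>i<m. a ^ i * b ^ (m - Suc i))"

lemma geom_sum_Suc: "geom_sum a b (Suc m) = b * geom_sum a b m + a ^ m"
proof -
  have "geom_sum a b (Suc m) = (\<Sum>i<m. a ^ i * b ^ (m - i)) + a ^ m"
    by (simp add: geom_sum_def)
  also have "(\<Sum>i<m. a ^ i * b ^ (m - i)) = b * geom_sum a b m"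
    unfolding geom_sum_def sum_distrib_left
  proof (intro sum.cong refl)
    fix i assume "i \<in> {..<m}"
    then have "m - i = Suc (m - Suc i)" by simp
    then show "a ^ i * b ^ (m - i) = b * (a ^ i * b ^ (m - Suc i))" by simp
  qed
  finally show ?thesis .
qed

lemma geom_sum_diff: "(b - a) * geom_sum a b m = b ^ m - a ^ m"
proof (cases m)
  case (Suc k)
  then have "a ^ m - b ^ m = (a - b) * geom_sum a b m"
    using diff_power_eq_sum[of a k b] by (simp add: geom_sum_def)
  then show ?thesis by (metis minus_diff_eq mult_minus_left)
qed (simp add: geom_sum_def)

lemma power_mult_geom_sum: "b ^ r * geom_sum a b m = (\<Sum>i<m. a ^ i * b ^ (r + m - Suc i))"
  unfolding geom_sum_def sum_distrib_left
  by (intro sum.cong refl) (simp add: power_add[symmetric] mult.left_commute)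

lemma dual_BD_below_identities:
  fixes \<beta> v C :: complex
  assumes \<beta>: "\<beta> \<noteq> 0" and p: "p \<le> k"
  defines "a \<equiv> -\<beta> * v" and "b \<equiv> inverse v - \<beta> * v"
  shows "(-\<beta>) ^ k * (C * b ^ p * v ^ (k - p) / (-\<beta>) ^ p) = C * b ^ p * a ^ (k - p)"
    and "inverse v * (C * b ^ p * geom_sum a b (k - p)) + (-\<beta>) ^ k * (C * b ^ p * v ^ (k - p) / (-\<beta>) ^ p)
      = C * b ^ k"
proof -
  have "(-\<beta>) ^ k = (-\<beta>) ^ p * (-\<beta>) ^ (k - p)"
    using p by (simp flip: power_add)
  moreover have "a ^ (k - p) = (-\<beta>) ^ (k - p) * v ^ (k - p)"
    unfolding a_def by (rule power_mult_distrib)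
  ultimately show key: "(-\<beta>) ^ k * (C * b ^ p * v ^ (k - p) / (-\<beta>) ^ p) = C * b ^ p * a ^ (k - p)"
    using \<beta> by simp
  have geom: "inverse v * geom_sum a b (k - p) + a ^ (k - p) = b ^ (k - p)"
    using geom_sum_diff[of b a "k - p"] by (simp add: a_def b_def)
  have "inverse v * (C * b ^ p * geom_sum a b (k - p)) + (-\<beta>) ^ k * (C * b ^ p * v ^ (k - p) / (-\<beta>) ^ p)
      = C * b ^ p * (inverse v * geom_sum a b (k - p) + a ^ (k - p))"
    unfolding key by (simp add: algebra_simps)
  also have "\<dots> = C * b ^ k"
    unfolding geom using p by (simp flip: power_add mult.assoc)
  finally show "inverse v * (C * b ^ p * geom_sum a b (k - p)) + (-\<beta>) ^ k * (C * b ^ p * v ^ (k - p) / (-\<beta>) ^ p)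
      = C * b ^ k" .
qed

text \<open>Below \<open>L\<close>, an empty site extends the geometric sum, while an occupied site collapses it
  to \<open>b\<^sup>k\<close> because \<open>b - a = v\<^sup>-\<^sup>1\<close>; so only the highest occupied site matters.\<close>

lemma dual_BD_below:
  fixes \<beta> v :: complex
  assumes v: "v \<noteq> 0" and \<beta>: "\<beta> \<noteq> 0"
  defines "a \<equiv> -\<beta> * v" and "b \<equiv> inverse v - \<beta> * v"
  shows "k \<le> L \<Longrightarrow> dual_BD \<beta> v (dual_weight \<beta> L) k n =
     (weight \<beta> k n * b ^ top_site k n * geom_sum a b (k - top_site k n),
      weight \<beta> k n * b ^ top_site k n * v ^ (k - top_site k n) / (-\<beta>) ^ top_site k n)"
proof (induction k)
  case 0
  then show ?case by (simp add: weight_def geom_sum_def)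
next
  case (Suc k)
  define p where "p = top_site k n"
  define C where "C = weight \<beta> k n"
  define F where "F = fst (dual_BD \<beta> v (dual_weight \<beta> L) k n)"
  define G where "G = snd (dual_BD \<beta> v (dual_weight \<beta> L) k n)"
  have kL: "k < L" using Suc.prems by simp
  have p: "p \<le> k" unfolding p_def by (rule top_site_le)
  have F: "F = C * b ^ p * geom_sum a b (k - p)" and G: "G = C * b ^ p * v ^ (k - p) / (-\<beta>) ^ p"
    using Suc kL unfolding F_def G_def C_def p_def by simp_all
  have key1: "(-\<beta>) ^ k * G = C * b ^ p * a ^ (k - p)"
    and key2: "inverse v * F + (-\<beta>) ^ k * G = C * b ^ k"
    unfolding F G a_def b_def using dual_BD_below_identities[OF \<beta> p] by simp_all
  show ?case
  proof (cases "n k")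
    case 0
    have "dual_BD \<beta> v (dual_weight \<beta> L) (Suc k) n = (b * F + (-\<beta>) ^ k * G, v * G)"
      using 0 kL by (simp add: dual_weight_below F_def G_def b_def)
    moreover have "top_site (Suc k) n = p" "weight \<beta> (Suc k) n = C" "Suc k - p = Suc (k - p)"
      using 0 p by (simp_all add: p_def C_def weight_Suc)
    moreover have "b * F + (-\<beta>) ^ k * G = C * b ^ p * geom_sum a b (Suc (k - p))"
      unfolding key1 F geom_sum_Suc by (simp add: algebra_simps)
    ultimately show ?thesis by (simp add: G mult_ac)
  next
    case (Suc x)
    define c where "c = (-\<beta>) ^ (k * x)"
    have DG: "F + v * (-\<beta>) ^ k * G = v * (C * b ^ k)"
      using v by (simp add: algebra_simps flip: key2)
    have "dual_BD \<beta> v (dual_weight \<beta> L) (Suc k) n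
        = (c * (-\<beta>) ^ k * (inverse v * F + (-\<beta>) ^ k * G), c * (F + v * (-\<beta>) ^ k * G))"
      using Suc kL by (simp add: dual_weight_below F_def G_def c_def power_add algebra_simps)
    also have "\<dots> = (C * c * (-\<beta>) ^ k * b ^ k, C * c * b ^ k * v)"
      unfolding key2 DG by (simp add: mult_ac)
    also have "\<dots> = (weight \<beta> (Suc k) n * b ^ k * geom_sum a b (Suc k - k),
                      weight \<beta> (Suc k) n * b ^ k * v ^ (Suc k - k) / (-\<beta>) ^ k)"
      using Suc \<beta> by (simp add: C_def c_def weight_Suc power_add geom_sum_def mult_ac)
    finally show ?thesis using Suc by simp
  qed
qed

lemma fst_dual_BD_above:
  fixes \<beta> v :: complex
  defines "b \<equiv> inverse v - \<beta> * v"
  shows "L \<le> k \<Longrightarrow> fst (dual_BD \<beta> v (dual_weight \<beta> L) k n) =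
     (if vacant L k n then b ^ (k - L) * fst (dual_BD \<beta> v (dual_weight \<beta> L) L n) else 0)"
proof (induction k)
  case (Suc k)
  show ?case
  proof (cases "L = Suc k")
    case False
    then have "L \<le> k" using Suc.prems by simp
    with Suc.IH show ?thesis
      by (auto simp: dual_weight_above b_def vacant_Suc Suc_diff_le)
  qed (simp add: vacant_def)
qed (simp add: vacant_def)

lemma fst_dual_BD_dual_weight:
  fixes \<beta> v :: complex
  assumes v: "v \<noteq> 0" and \<beta>: "\<beta> \<noteq> 0" and L: "1 \<le> L" "L \<le> M"
  defines "a \<equiv> -\<beta> * v" and "b \<equiv> inverse v - \<beta> * v"
  shows "fst (dual_BD \<beta> v (dual_weight \<beta> L) M n)
    = (\<Sum>i<L. a ^ i * b ^ (M - 1 - i) * dual_state \<beta> M (L - i) n)"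
proof -
  define p where "p = top_site M n"
  have vacant_iff: "vacant (L - i) M n \<longleftrightarrow> i < L - p" if "i < L" for i
  proof -
    have "vacant (L - i) M n \<longleftrightarrow> p < L - i"
      using top_site_less_iff[of "L - i" M n] that unfolding p_def by simp
    also have "\<dots> \<longleftrightarrow> i < L - p" using that by arith
    finally show ?thesis .
  qed
  have "fst (dual_BD \<beta> v (dual_weight \<beta> L) M n) = weight \<beta> M n * (\<Sum>i<L - p. a ^ i * b ^ (M - 1 - i))"
  proof (cases "p < L")
    case True
    then have vac: "vacant L M n" and top: "top_site L n = p"
      using top_site_less_iff[of L M n] top_site_vacant[of L M n] L unfolding p_def by auto
    have "M - L + p + (L - p) = M" using True L by arith
    then have "b ^ (M - L) * b ^ p * geom_sum a b (L - p) = (\<Sum>i<L - p. a ^ i * b ^ (M - 1 - i))"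
      using power_mult_geom_sum[of b "M - L + p" a "L - p"] by (simp only: power_add) simp
    then show ?thesis
      using fst_dual_BD_above[OF L(2), of \<beta> v n] dual_BD_below[OF v \<beta> order_refl, of L n]
      by (simp add: vac top weight_vacant[OF L(2) vac] a_def b_def mult_ac)
  next
    case False
    then show ?thesis
      using fst_dual_BD_above[OF L(2), of \<beta> v n] top_site_less_iff[of L M n] L
      by (simp add: p_def)
  qed
  also have "\<dots> = (\<Sum>i<L. if i < L - p then weight \<beta> M n * (a ^ i * b ^ (M - 1 - i)) else 0)"
    by (simp add: sum_distrib_left sum.If_cases Int_absorb1 flip: lessThan_def)
  also have "\<dots> = (\<Sum>i<L. a ^ i * b ^ (M - 1 - i) * dual_state \<beta> M (L - i) n)"
    using L by (intro sum.cong refl) (simp add: dual_state_eq vacant_iff)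
  finally show ?thesis .
qed

section \<open>Overlap of the Bethe vector with the dual states\<close>

lemma pairing_Bop_dual_state:
  assumes "v \<noteq> 0" and "\<beta> \<noteq> 0" and "1 \<le> L" and "L \<le> M"
  shows "pairing M (Suc P) (dual_state \<beta> M L) (Bop \<beta> M v \<psi>)
    = (\<Sum>i<L. (-\<beta> * v) ^ i * (inverse v - \<beta> * v) ^ (M - 1 - i)
                * pairing M P (dual_state \<beta> M (L - i)) \<psi>)"
proof -
  have "pairing M (Suc P) (dual_state \<beta> M L) (Bop \<beta> M v \<psi>)
      = pairing M P (\<lambda>m. fst (dual_BD \<beta> v (dual_weight \<beta> L) M m)) \<psi>"
    using pairing_monodromy_prod_state[of M M "\<lambda>_. 1" P "dual_weight \<beta> L" \<beta> v \<psi>]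
    by (simp add: dual_state_def prod_state_def Bop_def)
  then show ?thesis
    by (simp only: fst_dual_BD_dual_weight[OF assms] pairing_sum_left)
qed

text \<open>\<open>h_complete q s a n\<close> is the complete homogeneous symmetric polynomial of degree \<open>q\<close>
  in \<open>s a, \<dots>, s (a + n - 1)\<close>.\<close>

fun h_complete :: "nat \<Rightarrow> (nat \<Rightarrow> complex) \<Rightarrow> nat \<Rightarrow> nat \<Rightarrow> complex" where
  "h_complete q s a 0 = (if q = 0 then 1 else 0)"
| "h_complete q s a (Suc n) = (\<Sum>j\<le>q. s a ^ j * h_complete (q - j) s (Suc a) n)"

lemma sum_lessThan_convolution:
  fixes s :: "'a :: comm_semiring_1"
  shows "(\<Sum>q<L. \<Sum>j\<le>q. s ^ j * H (q - j)) = (\<Sum>i<L. s ^ i * (\<Sum>q<L - i. H q))"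
proof (induction L)
  case (Suc L)
  have "(\<Sum>i<Suc L. s ^ i * (\<Sum>q<Suc L - i. H q))
      = (\<Sum>i<Suc L. s ^ i * (\<Sum>q<L - i. H q) + s ^ i * H (L - i))"
    by (intro sum.cong refl) (simp add: Suc_diff_le distrib_left)
  also have "\<dots> = (\<Sum>i<L. s ^ i * (\<Sum>q<L - i. H q)) + (\<Sum>i\<le>L. s ^ i * H (L - i))"
    by (simp add: sum.distrib lessThan_Suc_atMost[symmetric])
  finally show ?case using Suc by simp
qed simp

lemma h_complete_cong:
  "(\<And>i. a \<le> i \<Longrightarrow> i < a + n \<Longrightarrow> s i = t i) \<Longrightarrow> h_complete q s a n = h_complete q t a n"
proof (induction n arbitrary: q a)
  case (Suc n)
  have "h_complete r s (Suc a) n = h_complete r t (Suc a) n" for r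
    using Suc.prems by (intro Suc.IH) auto
  moreover have "s a = t a" using Suc.prems by simp
  ultimately show ?case by simp
qed simp

definition sigma :: "complex \<Rightarrow> complex \<Rightarrow> complex" where
  "sigma \<beta> v = -\<beta> * v / (inverse v - \<beta> * v)"

lemma power_split_sigma:
  fixes \<beta> v :: complex
  assumes "v \<noteq> 0" and "inverse v - \<beta> * v \<noteq> 0" and "i \<le> K"
  shows "(-\<beta> * v) ^ i * (inverse v - \<beta> * v) ^ (K - i) = (inverse v - \<beta> * v) ^ K * sigma \<beta> v ^ i"
proof -
  have "(inverse v - \<beta> * v) ^ K = (inverse v - \<beta> * v) ^ i * (inverse v - \<beta> * v) ^ (K - i)"
    using assms(3) by (simp flip: power_add)
  moreover have "-\<beta> * v = (inverse v - \<beta> * v) * sigma \<beta> v"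
    using assms(2) by (simp add: sigma_def)
  ultimately show ?thesis by (simp add: power_mult_distrib)
qed

lemma pairing_dual_state_Psi:
  fixes \<beta> :: complex and v :: "nat \<Rightarrow> complex"
  assumes "\<beta> \<noteq> 0" and "1 \<le> L" and "L \<le> M"
    and "\<And>j. j \<in> {a..<a + n} \<Longrightarrow> v j \<noteq> 0 \<and> inverse (v j) - \<beta> * v j \<noteq> 0"
  shows "pairing M n (dual_state \<beta> M L) (Psi \<beta> M (map v [a..<a + n]))
    = (\<Prod>j\<in>{a..<a + n}. (inverse (v j) - \<beta> * v j) ^ (M - 1))
      * (\<Sum>q<L. h_complete q (\<lambda>j. sigma \<beta> (v j)) a n)"
  using assms(2-4)
proof (induction n arbitrary: a L)
  case 0
  then show ?case
    unfolding pairing_def configs_zero by (simp add: Psi_def vac_def dual_state_def dual_weight_def prod.neutral)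
next
  case (Suc n)
  define b where "b = inverse (v a) - \<beta> * v a"
  define Q where "Q = (\<Prod>j\<in>{Suc a..<Suc a + n}. (inverse (v j) - \<beta> * v j) ^ (M - 1))"
  let ?\<sigma> = "\<lambda>j. sigma \<beta> (v j)"
  let ?rest = "Psi \<beta> M (map v [Suc a..<Suc a + n])"
  have va: "v a \<noteq> 0" "b \<noteq> 0" using Suc.prems(3)[of a] by (auto simp: b_def)
  have power_split: "(-\<beta> * v a) ^ i * b ^ (M - 1 - i) = b ^ (M - 1) * ?\<sigma> a ^ i" if "i < L" for i
    unfolding b_def using va that Suc.prems(2) by (intro power_split_sigma) (auto simp: b_def)
  have "Psi \<beta> M (map v [a..<a + Suc n]) = Bop \<beta> M (v a) ?rest"
    by (simp add: Psi_def upt_conv_Cons del: upt_Suc)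
  then have "pairing M (Suc n) (dual_state \<beta> M L) (Psi \<beta> M (map v [a..<a + Suc n]))
      = (\<Sum>i<L. (-\<beta> * v a) ^ i * b ^ (M - 1 - i) * pairing M n (dual_state \<beta> M (L - i)) ?rest)"
    using pairing_Bop_dual_state[OF va(1) assms(1) Suc.prems(1,2)] by (simp add: b_def)
  also have "\<dots> = (\<Sum>i<L. b ^ (M - 1) * ?\<sigma> a ^ i * (Q * (\<Sum>q<L - i. h_complete q ?\<sigma> (Suc a) n)))"
  proof (intro sum.cong refl)
    fix i assume i: "i \<in> {..<L}"
    have "pairing M n (dual_state \<beta> M (L - i)) ?rest = Q * (\<Sum>q<L - i. h_complete q ?\<sigma> (Suc a) n)"
      unfolding Q_def using i Suc.prems by (intro Suc.IH) auto
    then show "(-\<beta> * v a) ^ i * b ^ (M - 1 - i) * pairing M n (dual_state \<beta> M (L - i)) ?rest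
        = b ^ (M - 1) * ?\<sigma> a ^ i * (Q * (\<Sum>q<L - i. h_complete q ?\<sigma> (Suc a) n))"
      using i by (simp only: power_split lessThan_iff)
  qed
  also have "\<dots> = b ^ (M - 1) * Q * (\<Sum>i<L. ?\<sigma> a ^ i * (\<Sum>q<L - i. h_complete q ?\<sigma> (Suc a) n))"
    unfolding sum_distrib_left by (simp add: mult_ac)
  also have "\<dots> = b ^ (M - 1) * Q * (\<Sum>q<L. h_complete q ?\<sigma> a (Suc n))"
    using sum_lessThan_convolution[where s = "?\<sigma> a" and H = "\<lambda>q. h_complete q ?\<sigma> (Suc a) n"] by simp
  also have "b ^ (M - 1) * Q = (\<Prod>j\<in>{a..<a + Suc n}. (inverse (v j) - \<beta> * v j) ^ (M - 1))"
    by (simp add: b_def Q_def prod.atLeast_Suc_lessThan)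
  finally show ?case .
qed

section \<open>Divided differences\<close>

text \<open>\<open>divdiff f y a n\<close> is the divided difference \<open>f[y a, \<dots>, y (a + n)]\<close>.\<close>

fun divdiff :: "(complex \<Rightarrow> complex) \<Rightarrow> (nat \<Rightarrow> complex) \<Rightarrow> nat \<Rightarrow> nat \<Rightarrow> complex" where
  "divdiff f y a 0 = f (y a)"
| "divdiff f y a (Suc n) = divdiff (\<lambda>t. (f t - f (y a)) / (t - y a)) y (Suc a) n"

lemma divdiff_cong:
  "(\<And>i. i \<le> n \<Longrightarrow> f (y (a + i)) = g (y (a + i))) \<Longrightarrow> divdiff f y a n = divdiff g y a n"
proof (induction n arbitrary: f g a)
  case (Suc n)
  have "f (y a) = g (y a)" using Suc.prems[of 0] by simp
  moreover have "f (y (Suc a + i)) = g (y (Suc a + i))" if "i \<le> n" for i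
    using Suc.prems[of "Suc i"] that by simp
  ultimately show ?case by (auto intro!: Suc.IH)
qed simp

lemma divdiff_cmult: "divdiff (\<lambda>t. c * f t) y a n = c * divdiff f y a n"
proof (induction n arbitrary: f a)
  case (Suc n)
  have "(\<lambda>t. (c * f t - c * f (y a)) / (t - y a)) = (\<lambda>t. c * ((f t - f (y a)) / (t - y a)))"
    by (simp add: algebra_simps)
  then show ?case by (simp only: divdiff.simps Suc.IH)
qed simp

lemma divdiff_sum:
  "finite I \<Longrightarrow> divdiff (\<lambda>t. \<Sum>i\<in>I. g i t) y a n = (\<Sum>i\<in>I. divdiff (g i) y a n)"
proof (induction n arbitrary: g a)
  case (Suc n)
  have "(\<lambda>t. ((\<Sum>i\<in>I. g i t) - (\<Sum>i\<in>I. g i (y a))) / (t - y a))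
      = (\<lambda>t. \<Sum>i\<in>I. (g i t - g i (y a)) / (t - y a))"
    by (simp add: sum_divide_distrib[symmetric] sum_subtractf)
  then show ?case using Suc by simp
qed simp

lemma divdiff_add: "divdiff (\<lambda>t. f t + g t) y a n = divdiff f y a n + divdiff g y a n"
  using divdiff_sum[of "{0::nat, 1}" "\<lambda>i t. if i = 0 then f t else g t" y a n] by simp

lemma divdiff_reflect:
  "divdiff f (\<lambda>i. c - s i) a n = (-1) ^ n * divdiff (\<lambda>u. f (c - u)) s a n"
proof (induction n arbitrary: f a)
  case (Suc n)
  have quotient: "(\<lambda>u. (f (c - u) - f (c - s a)) / (c - u - (c - s a)))
      = (\<lambda>u. -1 * ((f (c - u) - f (c - s a)) / (u - s a)))"
  proof
    fix u
    have "c - u - (c - s a) = - (u - s a)" by simp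
    then show "(f (c - u) - f (c - s a)) / (c - u - (c - s a)) = -1 * ((f (c - u) - f (c - s a)) / (u - s a))"
      by (simp only: divide_minus_right mult_minus1)
  qed
  have "divdiff f (\<lambda>i. c - s i) a (Suc n)
      = (-1) ^ n * divdiff (\<lambda>u. (f (c - u) - f (c - s a)) / (c - u - (c - s a))) s (Suc a) n"
    by (simp only: divdiff.simps Suc.IH)
  also have "\<dots> = (-1) ^ Suc n * divdiff (\<lambda>u. f (c - u)) s a (Suc n)"
    by (simp only: quotient divdiff_cmult divdiff.simps) simp
  finally show ?case .
qed simp

lemma divdiff_power:
  assumes "\<And>i j. i \<le> n \<Longrightarrow> j \<le> n \<Longrightarrow> i \<noteq> j \<Longrightarrow> s (a + i) \<noteq> s (a + j)"
  shows "divdiff (\<lambda>t. t ^ d) s a n = (if n \<le> d then h_complete (d - n) s a (Suc n) else 0)"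
  using assms
proof (induction n arbitrary: a d)
  case 0
  have "(\<Sum>j\<le>d. s a ^ j * h_complete (d - j) s (Suc a) 0) = (\<Sum>j\<le>d. if j = d then s a ^ j else 0)"
    by (intro sum.cong) auto
  then show ?case by simp
next
  case (Suc n)
  have distinct: "s (Suc a + i) \<noteq> s (Suc a + j)" if "i \<le> n" "j \<le> n" "i \<noteq> j" for i j
    using Suc.prems[of "Suc i" "Suc j"] that by simp
  have "divdiff (\<lambda>t. t ^ d) s a (Suc n) = divdiff (\<lambda>t. \<Sum>i<d. s a ^ (d - Suc i) * t ^ i) s (Suc a) n"
    unfolding divdiff.simps
  proof (rule divdiff_cong)
    fix i assume "i \<le> n"
    then have "s (Suc a + i) \<noteq> s a" using Suc.prems[of "Suc i" 0] by simp
    then show "(s (Suc a + i) ^ d - s a ^ d) / (s (Suc a + i) - s a)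
        = (\<Sum>k<d. s a ^ (d - Suc k) * s (Suc a + i) ^ k)"
      by (simp add: power_diff_sumr2)
  qed
  also have "\<dots> = (\<Sum>i<d. s a ^ (d - Suc i) * (if n \<le> i then h_complete (i - n) s (Suc a) (Suc n) else 0))"
    by (simp add: divdiff_sum divdiff_cmult Suc.IH[OF distinct])
  also have "\<dots> = (if Suc n \<le> d then h_complete (d - Suc n) s a (Suc (Suc n)) else 0)"
  proof (cases "Suc n \<le> d")
    case True
    have "(\<Sum>i<d. s a ^ (d - Suc i) * (if n \<le> i then h_complete (i - n) s (Suc a) (Suc n) else 0))
        = (\<Sum>i\<in>{n..<d}. s a ^ (d - Suc i) * h_complete (i - n) s (Suc a) (Suc n))"
      by (rule sum.mono_neutral_cong_right) auto
    also have "\<dots> = (\<Sum>j\<le>d - Suc n. s a ^ j * h_complete (d - Suc n - j) s (Suc a) (Suc n))"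
      by (rule sum.reindex_bij_witness[where i="\<lambda>j. d - Suc j" and j="\<lambda>i. d - Suc i"])
         (use True in \<open>auto simp: Suc_diff_Suc\<close>)
    finally show ?thesis using True by simp
  qed (auto intro!: sum.neutral)
  finally show ?case .
qed

section \<open>A Vandermonde determinant with a general last row\<close>

lemma det_mult_cols:
  fixes A B :: "'a :: comm_ring_1 mat"
  assumes A: "A \<in> carrier_mat n n" and B: "B \<in> carrier_mat n n"
    and entries: "\<And>i k. i < n \<Longrightarrow> k < n \<Longrightarrow> A $$ (i, k) = B $$ (i, k) * d k"
  shows "det A = (\<Prod>k<n. d k) * det B"
proof -
  have "signof p * (\<Prod>i = 0..<n. A $$ (i, p i)) = (\<Prod>k<n. d k) * (signof p * (\<Prod>i = 0..<n. B $$ (i, p i)))"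
    if p: "p permutes {0..<n}" for p
  proof -
    have "(\<Prod>i = 0..<n. A $$ (i, p i)) = (\<Prod>i = 0..<n. B $$ (i, p i)) * (\<Prod>i = 0..<n. d (p i))"
      using permutes_in_image[OF p] by (simp add: entries prod.distrib)
    also have "(\<Prod>i = 0..<n. d (p i)) = (\<Prod>k<n. d k)"
      using prod.reindex_bij_betw[OF permutes_imp_bij[OF p], of d] by (simp add: atLeast0LessThan)
    finally show ?thesis by (simp add: mult_ac)
  qed
  then show ?thesis
    unfolding det_def'[OF A] det_def'[OF B] sum_distrib_left by (intro sum.cong) auto
qed

lemma det_add_next_rows:
  fixes A :: "'a :: comm_ring_1 mat"
  assumes A: "A \<in> carrier_mat n n"
  shows "m < n \<Longrightarrow>
    det (mat n n (\<lambda>(i, k). if i < m then A $$ (i, k) + c i * A $$ (Suc i, k) else A $$ (i, k))) = det A"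
proof (induction m)
  case 0
  have "mat n n (\<lambda>(i, k). A $$ (i, k)) = A" using A by (intro eq_matI) auto
  then show ?case by simp
next
  case (Suc m)
  let ?A = "\<lambda>m. mat n n (\<lambda>(i, k). if i < m then A $$ (i, k) + c i * A $$ (Suc i, k) else A $$ (i, k))"
  have "?A (Suc m) = addrow (c m) m (Suc m) (?A m)"
    using Suc.prems by (intro eq_matI) (auto simp: less_Suc_eq)
  then show ?case
    using Suc det_addrow[of "Suc m" n m "?A m" "c m"] by simp
qed

definition vandermonde_with :: "(complex \<Rightarrow> complex) \<Rightarrow> (nat \<Rightarrow> complex) \<Rightarrow> nat \<Rightarrow> nat \<Rightarrow> complex mat" where
  "vandermonde_with f y a n = mat (Suc n) (Suc n)
     (\<lambda>(i, k). if i < n then y (a + k) ^ (n - 1 - i) else f (y (a + k)))"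

fun vandermonde_prod :: "(nat \<Rightarrow> complex) \<Rightarrow> nat \<Rightarrow> nat \<Rightarrow> complex" where
  "vandermonde_prod y a 0 = 1"
| "vandermonde_prod y a (Suc n) =
     (-1) ^ n * (\<Prod>k<Suc n. y (Suc a + k) - y a) * vandermonde_prod y (Suc a) n"

lemma det_single_entry_column:
  fixes A :: "'a :: comm_ring_1 mat"
  assumes A: "A \<in> carrier_mat n n" and r: "r < n" and zero: "\<And>i. i < n \<Longrightarrow> i \<noteq> r \<Longrightarrow> A $$ (i, 0) = 0"
  shows "det A = (-1) ^ r * A $$ (r, 0) * det (mat_delete A r 0)"
proof -
  have "det A = (\<Sum>i<n. A $$ (i, 0) * cofactor A i 0)"
    by (rule laplace_expansion_column[OF A]) (use r in simp)
  also have "\<dots> = A $$ (r, 0) * cofactor A r 0 + (\<Sum>i\<in>{..<n} - {r}. A $$ (i, 0) * cofactor A i 0)"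
    by (rule sum.remove) (use r in simp_all)
  also have "(\<Sum>i\<in>{..<n} - {r}. A $$ (i, 0) * cofactor A i 0) = 0"
    using zero by (intro sum.neutral) auto
  finally show ?thesis by (simp add: cofactor_def)
qed

text \<open>Subtract \<open>y a\<close> times the next row from each power row, and \<open>f (y a)\<close> times the
  constant row from the last row.\<close>

lemma det_vandermonde_with_reduce:
  "det (vandermonde_with f y a (Suc n)) = det (mat (Suc (Suc n)) (Suc (Suc n)) (\<lambda>(i, k).
     if i < n then y (a + k) ^ (n - 1 - i) * (y (a + k) - y a)
     else if i = n then 1 else f (y (a + k)) - f (y a)))"
    (is "_ = det ?B")
proof -
  define N where "N = Suc (Suc n)"
  define W where "W = vandermonde_with f y a (Suc n)"
  have W: "W \<in> carrier_mat N N" by (simp add: W_def vandermonde_with_def N_def)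
  have W_entry: "W $$ (i, k) = (if i \<le> n then y (a + k) ^ (n - i) else f (y (a + k)))"
    if "i < N" "k < N" for i k
    using that by (simp add: W_def vandermonde_with_def N_def)
  define A where "A = mat N N (\<lambda>(i, k). if i < n then W $$ (i, k) + (- y a) * W $$ (Suc i, k) else W $$ (i, k))"
  have "?B = addrow (- f (y a)) (Suc n) n A"
  proof (rule eq_matI)
    fix i k assume "i < dim_row (addrow (- f (y a)) (Suc n) n A)" "k < dim_col (addrow (- f (y a)) (Suc n) n A)"
    then have i: "i < N" and k: "k < N" by (simp_all add: A_def)
    consider "i < n" | "i = n" | "i = Suc n" using i unfolding N_def by linarith
    then show "?B $$ (i, k) = addrow (- f (y a)) (Suc n) n A $$ (i, k)"
    proof cases
      case 1
      then have "n - i = Suc (n - 1 - i)" by arith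
      with 1 i k show ?thesis
        by (simp add: A_def W_entry N_def algebra_simps)
    qed (use i k in \<open>simp_all add: A_def W_entry N_def\<close>)
  qed (simp_all add: A_def N_def)
  then show ?thesis
    using det_addrow[of n N "Suc n" A] det_add_next_rows[OF W, of n] W by (simp add: A_def N_def W_def)
qed

lemma det_vandermonde_with_Suc:
  "det (vandermonde_with f y a (Suc n)) = (-1) ^ n * (\<Prod>k<Suc n. y (Suc a + k) - y a)
     * det (vandermonde_with (\<lambda>t. (f t - f (y a)) / (t - y a)) y (Suc a) n)"
proof -
  define g where "g = (\<lambda>t. (f t - f (y a)) / (t - y a))"
  define B where "B = mat (Suc (Suc n)) (Suc (Suc n)) (\<lambda>(i, k).
    if i < n then y (a + k) ^ (n - 1 - i) * (y (a + k) - y a) else if i = n then 1 else f (y (a + k)) - f (y a))"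
  have B: "B \<in> carrier_mat (Suc (Suc n)) (Suc (Suc n))" by (simp add: B_def)
  have "det (vandermonde_with f y a (Suc n)) = (-1) ^ n * det (mat_delete B n 0)"
    unfolding det_vandermonde_with_reduce B_def[symmetric]
    by (subst det_single_entry_column[OF B, of n]) (simp_all add: B_def)
  also have "det (mat_delete B n 0) = (\<Prod>k<Suc n. y (Suc a + k) - y a) * det (vandermonde_with g y (Suc a) n)"
  proof (rule det_mult_cols)
    show "mat_delete B n 0 \<in> carrier_mat (Suc n) (Suc n)"
      using mat_delete_carrier[OF B] by simp
    fix i k assume "i < Suc n" "k < Suc n"
    moreover have "f (y (Suc a + k)) - f (y a) = g (y (Suc a + k)) * (y (Suc a + k) - y a)"
      by (cases "y (Suc a + k) = y a") (simp_all add: g_def)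
    ultimately show "mat_delete B n 0 $$ (i, k) = vandermonde_with g y (Suc a) n $$ (i, k) * (y (Suc a + k) - y a)"
      by (simp add: mat_delete_def B_def vandermonde_with_def)
  qed (simp add: vandermonde_with_def)
  finally show ?thesis by (simp add: g_def mult.assoc)
qed

lemma det_vandermonde_with: "det (vandermonde_with f y a n) = vandermonde_prod y a n * divdiff f y a n"
proof (induction n arbitrary: f a)
  case 0
  show ?case by (simp add: det_single vandermonde_with_def)
next
  case (Suc n)
  then show ?case by (simp add: det_vandermonde_with_Suc)
qed

section \<open>Factorisation of the matrix \<open>V\<close>\<close>

lemma binomial_alternating_shifted:
  fixes t :: "'a :: comm_ring_1"
  shows "t * (\<Sum>m = 1..K. (-1) ^ m * of_nat (K choose m) * t ^ (m - 1)) = (1 - t) ^ K - 1"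
proof -
  have "t * (\<Sum>m = 1..K. (-1) ^ m * of_nat (K choose m) * t ^ (m - 1))
      = (\<Sum>m = 1..K. of_nat (K choose m) * (-t) ^ m * 1 ^ (K - m))"
    unfolding sum_distrib_left
  proof (intro sum.cong refl)
    fix m :: nat assume "m \<in> {1..K}"
    then have "t ^ m = t * t ^ (m - 1)" by (cases m) auto
    then show "t * ((-1) ^ m * of_nat (K choose m) * t ^ (m - 1)) = of_nat (K choose m) * (-t) ^ m * 1 ^ (K - m)"
      by (simp add: power_minus[of t] mult_ac)
  qed
  also have "\<dots> = (\<Sum>m\<le>K. of_nat (K choose m) * (-t) ^ m * 1 ^ (K - m)) - 1"
    by (simp add: atMost_atLeast0 sum.atLeast_Suc_atMost)
  also have "\<dots> = (1 - t) ^ K - 1"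
    using binomial_ring[of "-t" 1 K] by simp
  finally show ?thesis .
qed

definition last_row_poly :: "nat \<Rightarrow> nat \<Rightarrow> complex \<Rightarrow> complex" where
  "last_row_poly M N t = - (\<Sum>m = max (N - 1) 1..M + N - 1.
     (-1) ^ m * of_nat ((M + N - 1) choose m) * t ^ (m - 1))"

text \<open>The second sum consists of monomials of degree below \<open>N - 2\<close>, which the divided
  difference of order \<open>N - 1\<close> annihilates.\<close>

lemma last_row_poly_eq:
  fixes t :: complex
  assumes "t \<noteq> 0" and "M \<ge> 1" and "N \<ge> 1"
  shows "last_row_poly M N t = (\<Sum>i<M + N - 1. (1 - t) ^ i)
    + (\<Sum>m\<in>{1..<max (N - 1) 1}. (-1) ^ m * of_nat ((M + N - 1) choose m) * t ^ (m - 1))"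
proof -
  define K where "K = M + N - 1"
  define L where "L = max (N - 1) 1"
  let ?c = "\<lambda>m. (-1) ^ m * of_nat (K choose m) * t ^ (m - 1)"
  have "t * (\<Sum>i<K. (1 - t) ^ i) = 1 - (1 - t) ^ K"
    using one_diff_power_eq[of "1 - t" K] by simp
  then have "t * ((\<Sum>i<K. (1 - t) ^ i) + (\<Sum>m = 1..K. ?c m)) = 0"
    unfolding distrib_left binomial_alternating_shifted by simp
  then have full: "(\<Sum>m = 1..K. ?c m) = - (\<Sum>i<K. (1 - t) ^ i)"
    using assms(1) by (simp add: eq_neg_iff_add_eq_0 add.commute)
  have "{1..K} = {1..<L} \<union> {L..K}" using assms unfolding K_def L_def by auto
  then have "(\<Sum>m\<in>{1..<L}. ?c m) + (\<Sum>m = L..K. ?c m) = - (\<Sum>i<K. (1 - t) ^ i)"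
    using full by (simp add: sum.union_disjoint ivl_disj_int)
  then have "(\<Sum>m = L..K. ?c m) = - (\<Sum>i<K. (1 - t) ^ i) - (\<Sum>m\<in>{1..<L}. ?c m)"
    by (simp add: eq_diff_eq add.commute)
  then show ?thesis
    unfolding last_row_poly_def K_def[symmetric] L_def[symmetric] by simp
qed

lemma divdiff_last_row_poly:
  assumes "M \<ge> 1" and "N \<ge> 1"
    and nonzero: "\<And>i. i \<le> N - 1 \<Longrightarrow> s (1 + i) \<noteq> 1"
    and distinct: "\<And>i j. i \<le> N - 1 \<Longrightarrow> j \<le> N - 1 \<Longrightarrow> i \<noteq> j \<Longrightarrow> s (1 + i) \<noteq> s (1 + j)"
  shows "divdiff (last_row_poly M N) (\<lambda>i. 1 - s i) 1 (N - 1) = (-1) ^ (N - 1) * (\<Sum>q<M. h_complete q s 1 N)"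
proof -
  obtain n where N: "N = Suc n" using assms(2) by (cases N) auto
  define y where "y = (\<lambda>i. 1 - s i)"
  have y_distinct: "y (1 + i) \<noteq> y (1 + j)" if "i \<le> n" "j \<le> n" "i \<noteq> j" for i j
    using distinct that unfolding y_def N by auto
  define geom where "geom = (\<lambda>t::complex. \<Sum>i<M + n. (1 - t) ^ i)"
  define low where "low = (\<lambda>t::complex. \<Sum>m\<in>{1..<max n 1}. (-1) ^ m * of_nat ((M + N - 1) choose m) * t ^ (m - 1))"
  have low_vanishes: "divdiff low y 1 n = 0"
    using divdiff_power[of n y 1, OF y_distinct]
    by (auto simp: low_def divdiff_sum divdiff_cmult intro!: sum.neutral)
  have "divdiff (last_row_poly M N) y 1 n = divdiff (\<lambda>t. geom t + low t) y 1 n"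
    using nonzero assms(1,2) last_row_poly_eq
    by (intro divdiff_cong) (simp add: y_def geom_def low_def N)
  also have "\<dots> = divdiff geom y 1 n"
    unfolding divdiff_add low_vanishes by simp
  also have "divdiff geom y 1 n = (-1) ^ n * (\<Sum>i<M + n. divdiff (\<lambda>u. u ^ i) s 1 n)"
    unfolding y_def divdiff_reflect by (simp add: geom_def divdiff_sum)
  also have "(\<Sum>i<M + n. divdiff (\<lambda>u. u ^ i) s 1 n) = (\<Sum>i\<in>{n..<M + n}. h_complete (i - n) s 1 N)"
    using divdiff_power[of n s 1] distinct
    by (intro sum.mono_neutral_cong_right) (auto simp: N)
  also have "\<dots> = (\<Sum>q<M. h_complete q s 1 N)"
    using sum.shift_bounds_nat_ivl[of "\<lambda>i. h_complete (i - n) s 1 N" 0 n M]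
    by (simp add: atLeast0LessThan add.commute)
  finally show ?thesis unfolding y_def N by simp
qed

text \<open>The substitution \<open>l = j - m\<close> turns the negative powers of \<open>1 - \<beta> v\<^sub>k\<^sup>2\<close> in row \<open>j\<close>
  of \<open>V\<close> into powers of the node \<open>(1 - \<beta> v\<^sub>k\<^sup>2)\<^sup>-\<^sup>1\<close>.\<close>

definition lower_factor :: "complex \<Rightarrow> nat \<Rightarrow> nat \<Rightarrow> complex mat" where
  "lower_factor \<beta> M N = mat N N (\<lambda>(j, l).
     if j < N - 1 then
       (if l \<le> j then (-1) ^ (j - l) * (-\<beta>) powi (int (j + 1) - int N) * of_nat ((M + N - 1) choose (j - l))
        else 0)
     else if l = N - 1 then 1 else 0)"

lemma Vmat_upper_entry:
  fixes \<beta> :: complex and v :: "nat \<Rightarrow> complex"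
  assumes j: "j < N - 1" and k: "k < N"
  defines "y \<equiv> inverse (1 - \<beta> * (v (k + 1))\<^sup>2)"
  shows "Vmat \<beta> M N v $$ (j, k) = (\<Sum>l\<le>j. lower_factor \<beta> M N $$ (j, l) * y ^ (N - 2 - l))"
proof -
  have "Vmat \<beta> M N v $$ (j, k) = (\<Sum>m\<le>j. (-1) ^ m * (-\<beta>) powi (int (j + 1) - int N)
      * of_nat ((M + N - 1) choose m) * (1 - \<beta> * (v (k + 1))\<^sup>2) powi (1 - int m + int (j + 1) - int N))"
    using j k by (simp add: Vmat_def Let_def atLeast0AtMost)
  also have "\<dots> = (\<Sum>l\<le>j. lower_factor \<beta> M N $$ (j, l) * y ^ (N - 2 - l))"
  proof (rule sum.reindex_bij_witness[where i = "\<lambda>l. j - l" and j = "\<lambda>m. j - m"])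
    fix m assume m: "m \<in> {..j}"
    have "nat (- (1 - int m + int (j + 1) - int N)) = N - 2 - (j - m)" using j m by auto
    then show "lower_factor \<beta> M N $$ (j, j - m) * y ^ (N - 2 - (j - m))
        = (-1) ^ m * (-\<beta>) powi (int (j + 1) - int N) * of_nat ((M + N - 1) choose m)
          * (1 - \<beta> * (v (k + 1))\<^sup>2) powi (1 - int m + int (j + 1) - int N)"
      using j k m by (simp add: lower_factor_def y_def power_int_def power_inverse) arith
  qed auto
  finally show ?thesis .
qed

lemma Vmat_last_entry:
  fixes \<beta> :: complex
  assumes "N \<ge> 1" and "k < N"
  shows "Vmat \<beta> M N v $$ (N - 1, k) = last_row_poly M N (inverse (1 - \<beta> * (v (k + 1))\<^sup>2))"
proof -
  have "(1 - \<beta> * (v (k + 1))\<^sup>2) powi (1 - int m) = inverse (1 - \<beta> * (v (k + 1))\<^sup>2) ^ (m - 1)"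
    if "m \<in> {max (N - 1) 1..M + N - 1}" for m
  proof -
    have "nat (- (1 - int m)) = m - 1" using that by auto
    then show ?thesis using that by (simp add: power_int_def power_inverse)
  qed
  then show ?thesis using assms by (simp add: Vmat_def last_row_poly_def Let_def)
qed

lemma Vmat_factor:
  fixes \<beta> :: complex
  assumes N: "N \<ge> 1"
  shows "Vmat \<beta> M N v = lower_factor \<beta> M N
    * vandermonde_with (last_row_poly M N) (\<lambda>k. inverse (1 - \<beta> * (v k)\<^sup>2)) 1 (N - 1)"
    (is "_ = ?U * ?W")
proof (rule eq_matI)
  fix j k assume "j < dim_row (?U * ?W)" "k < dim_col (?U * ?W)"
  then have j: "j < N" and k: "k < N" using N by (simp_all add: lower_factor_def vandermonde_with_def)
  have "(?U * ?W) $$ (j, k) = (\<Sum>l<N. ?U $$ (j, l) * ?W $$ (l, k))"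
    using j k N by (simp add: lower_factor_def vandermonde_with_def scalar_prod_def atLeast0LessThan)
  also have "\<dots> = Vmat \<beta> M N v $$ (j, k)"
  proof (cases "j < N - 1")
    case True
    have "(\<Sum>l<N. ?U $$ (j, l) * ?W $$ (l, k)) = (\<Sum>l\<le>j. ?U $$ (j, l) * ?W $$ (l, k))"
      using True by (intro sum.mono_neutral_right) (auto simp: lower_factor_def)
    also have "\<dots> = Vmat \<beta> M N v $$ (j, k)"
      unfolding Vmat_upper_entry[OF True k] using True k N
      by (intro sum.cong refl) (simp add: vandermonde_with_def add.commute)
    finally show ?thesis .
  next
    case False
    then have j: "j = N - 1" using j by simp
    have "(\<Sum>l<N. ?U $$ (j, l) * ?W $$ (l, k)) = (\<Sum>l\<in>{N - 1}. ?U $$ (j, l) * ?W $$ (l, k))"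
      using j N by (intro sum.mono_neutral_right) (auto simp: lower_factor_def)
    also have "\<dots> = Vmat \<beta> M N v $$ (j, k)"
      unfolding j Vmat_last_entry[OF N k] using k N by (simp add: lower_factor_def vandermonde_with_def add.commute)
    finally show ?thesis .
  qed
  finally show "Vmat \<beta> M N v $$ (j, k) = (?U * ?W) $$ (j, k)" ..
qed (use N in \<open>simp_all add: Vmat_def lower_factor_def vandermonde_with_def\<close>)

lemma det_lower_factor:
  assumes N: "N \<ge> 1"
  shows "det (lower_factor \<beta> M N) = inverse (\<Prod>e = 1..N - 1. (-\<beta>) ^ e)"
proof -
  let ?U = "lower_factor \<beta> M N"
  have U: "?U \<in> carrier_mat N N" by (simp add: lower_factor_def)
  have diag: "?U $$ (i, i) = inverse (-\<beta>) ^ (N - 1 - i)" if "i < N - 1" for i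
  proof -
    have "nat (- (int (i + 1) - int N)) = N - 1 - i" "\<not> 0 \<le> int (i + 1) - int N" using that by auto
    then show ?thesis using that by (simp add: lower_factor_def power_int_def)
  qed
  have "det ?U = (\<Prod>i = 0..<N. ?U $$ (i, i))"
    using det_lower_triangular[OF _ U] U by (simp add: lower_factor_def prod_list_diag_prod)
  also have "\<dots> = ?U $$ (N - 1, N - 1) * (\<Prod>i = 0..<N - 1. ?U $$ (i, i))"
    using prod.atLeast0_lessThan_Suc[of _ "N - 1"] N by (simp add: mult.commute)
  also have "\<dots> = (\<Prod>i = 0..<N - 1. inverse (-\<beta>) ^ (N - 1 - i))"
    using N diag by (simp add: lower_factor_def)
  also have "\<dots> = (\<Prod>e = 1..N - 1. inverse ((-\<beta>) ^ e))"
    unfolding power_inverse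
    by (rule prod.reindex_bij_witness[where i = "\<lambda>e. N - 1 - e" and j = "\<lambda>i. N - 1 - i"]) auto
  also have "\<dots> = inverse (\<Prod>e = 1..N - 1. (-\<beta>) ^ e)"
    using prod_inversef[of "\<lambda>e. (-\<beta>) ^ e" "{1..N - 1}"] by (simp only: comp_def)
  finally show ?thesis .
qed

definition sq_vandermonde :: "(nat \<Rightarrow> complex) \<Rightarrow> nat \<Rightarrow> nat \<Rightarrow> complex" where
  "sq_vandermonde v a n = (\<Prod>(j, k)\<in>{(j, k). a \<le> j \<and> j < k \<and> k \<le> a + n}. (v k)\<^sup>2 - (v j)\<^sup>2)"

lemma sq_vandermonde_Suc:
  "sq_vandermonde v a (Suc n) = (\<Prod>k<Suc n. (v (Suc a + k))\<^sup>2 - (v a)\<^sup>2) * sq_vandermonde v (Suc a) n"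
proof -
  let ?first = "(\<lambda>k. (a, Suc a + k)) ` {..<Suc n}"
  let ?rest = "{(j, k). Suc a \<le> j \<and> j < k \<and> k \<le> Suc a + n}"
  have split: "{(j, k). a \<le> j \<and> j < k \<and> k \<le> a + Suc n} = ?first \<union> ?rest"
  proof (intro equalityI subsetI)
    fix p assume "p \<in> {(j, k). a \<le> j \<and> j < k \<and> k \<le> a + Suc n}"
    then obtain j k where p: "p = (j, k)" "a \<le> j" "j < k" "k \<le> a + Suc n" by auto
    show "p \<in> ?first \<union> ?rest"
    proof (cases "j = a")
      case True
      then have "p = (\<lambda>k. (a, Suc a + k)) (k - Suc a)" "k - Suc a < Suc n" using p by auto
      then show ?thesis by blast
    qed (use p in auto)
  qed auto
  have "finite ?rest"
    by (rule finite_subset[of _ "{Suc a..Suc a + n} \<times> {Suc a..Suc a + n}"]) auto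
  then show ?thesis
    unfolding sq_vandermonde_def split by (subst prod.union_disjoint) (auto simp: prod.reindex inj_on_def)
qed

lemma prod_power_Suc_split:
  fixes x :: "nat \<Rightarrow> 'a :: comm_monoid_mult"
  shows "(\<Prod>j\<in>{a..a + Suc n}. x j ^ Suc n)
    = x a ^ Suc n * (\<Prod>k<Suc n. x (Suc a + k)) * (\<Prod>j\<in>{Suc a..Suc a + n}. x j ^ n)"
proof -
  have "{a..a + Suc n} = insert a {Suc a..Suc a + n}" by auto
  then have "(\<Prod>j\<in>{a..a + Suc n}. x j ^ Suc n) = x a ^ Suc n * (\<Prod>j\<in>{Suc a..Suc a + n}. x j * x j ^ n)"
    by simp
  also have "\<dots> = x a ^ Suc n * (\<Prod>j\<in>{Suc a..Suc a + n}. x j) * (\<Prod>j\<in>{Suc a..Suc a + n}. x j ^ n)"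
    by (simp only: prod.distrib mult.assoc)
  also have "(\<Prod>j\<in>{Suc a..Suc a + n}. x j) = (\<Prod>k<Suc n. x (Suc a + k))"
    by (rule prod.reindex_bij_witness[where i = "\<lambda>k. Suc a + k" and j = "\<lambda>j. j - Suc a"]) auto
  finally show ?thesis .
qed

lemma vandermonde_prod_inverse_nodes:
  fixes \<beta> :: complex
  assumes "\<And>j. j \<in> {a..a + n} \<Longrightarrow> 1 - \<beta> * (v j)\<^sup>2 \<noteq> 0 \<and> y j = inverse (1 - \<beta> * (v j)\<^sup>2)"
  shows "vandermonde_prod y a n * (\<Prod>j\<in>{a..a + n}. (1 - \<beta> * (v j)\<^sup>2) ^ n)
    = (-1) ^ n * (\<Prod>e = 1..n. (-\<beta>) ^ e) * sq_vandermonde v a n"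
  using assms
proof (induction n arbitrary: a)
  case 0
  have "{(j, k). a \<le> j \<and> j < k \<and> k \<le> a + 0} = {}" by auto
  then show ?case unfolding sq_vandermonde_def by (simp only: prod.empty) simp
next
  case (Suc n)
  define x where "x = (\<lambda>j. 1 - \<beta> * (v j)\<^sup>2)"
  have pair: "(y (Suc a + k) - y a) * x a * x (Suc a + k) = \<beta> * ((v (Suc a + k))\<^sup>2 - (v a)\<^sup>2)"
    if "k \<in> {..<Suc n}" for k
  proof -
    have "x a \<noteq> 0" "y a = inverse (x a)" "x (Suc a + k) \<noteq> 0" "y (Suc a + k) = inverse (x (Suc a + k))"
      using Suc.prems[of a] Suc.prems[of "Suc a + k"] that by (auto simp: x_def)
    then have "(y (Suc a + k) - y a) * x a * x (Suc a + k) = x a - x (Suc a + k)"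
      by (simp add: field_simps)
    then show ?thesis by (simp add: x_def algebra_simps)
  qed
  have IH: "vandermonde_prod y (Suc a) n * (\<Prod>j\<in>{Suc a..Suc a + n}. x j ^ n)
      = (-1) ^ n * (\<Prod>e = 1..n. (-\<beta>) ^ e) * sq_vandermonde v (Suc a) n"
    unfolding x_def using Suc.prems by (intro Suc.IH) auto
  note prod_power_Suc_split[where x = x and a = a and n = n]
  moreover have "(\<Prod>k<Suc n. (y (Suc a + k) - y a) * x a * x (Suc a + k))
      = (\<Prod>k<Suc n. y (Suc a + k) - y a) * x a ^ Suc n * (\<Prod>k<Suc n. x (Suc a + k))"
    by (simp only: prod.distrib prod_constant card_lessThan)
  ultimately have "vandermonde_prod y a (Suc n) * (\<Prod>j\<in>{a..a + Suc n}. x j ^ Suc n)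
      = (-1) ^ n * (\<Prod>k<Suc n. (y (Suc a + k) - y a) * x a * x (Suc a + k))
        * (vandermonde_prod y (Suc a) n * (\<Prod>j\<in>{Suc a..Suc a + n}. x j ^ n))"
    by (simp only: vandermonde_prod.simps mult_ac)
  also have "(\<Prod>k<Suc n. (y (Suc a + k) - y a) * x a * x (Suc a + k))
      = (\<Prod>k<Suc n. \<beta> * ((v (Suc a + k))\<^sup>2 - (v a)\<^sup>2))"
    by (rule prod.cong[OF refl pair])
  also have "\<dots> = \<beta> ^ Suc n * (\<Prod>k<Suc n. (v (Suc a + k))\<^sup>2 - (v a)\<^sup>2)"
    by (simp only: prod.distrib prod_constant card_lessThan)
  also note IH
  also have "(-1) ^ n * (\<beta> ^ Suc n * (\<Prod>k<Suc n. (v (Suc a + k))\<^sup>2 - (v a)\<^sup>2))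
      * ((-1) ^ n * (\<Prod>e = 1..n. (-\<beta>) ^ e) * sq_vandermonde v (Suc a) n)
      = ((-1) ^ n * (-1) ^ n) * \<beta> ^ Suc n * (\<Prod>e = 1..n. (-\<beta>) ^ e)
        * ((\<Prod>k<Suc n. (v (Suc a + k))\<^sup>2 - (v a)\<^sup>2) * sq_vandermonde v (Suc a) n)"
    by (simp only: mult_ac)
  also have "\<dots> = ((-1) ^ Suc n * (-\<beta>) ^ Suc n) * (\<Prod>e = 1..n. (-\<beta>) ^ e) * sq_vandermonde v a (Suc n)"
    unfolding sq_vandermonde_Suc by (simp flip: power_mult_distrib)
  also have "\<dots> = (-1) ^ Suc n * (\<Prod>e = 1..Suc n. (-\<beta>) ^ e) * sq_vandermonde v a (Suc n)"
    by (simp only: prod.nat_ivl_Suc' mult_ac)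
  finally show ?case by (simp add: x_def)
qed

lemma one_minus_mult_square_nonzero:
  fixes \<beta> v :: complex
  assumes "inverse (v\<^sup>2) \<noteq> \<beta>"
  shows "1 - \<beta> * v\<^sup>2 \<noteq> 0"
proof
  assume "1 - \<beta> * v\<^sup>2 = 0"
  then have "\<beta> * v\<^sup>2 = 1" by simp
  then have "inverse (v\<^sup>2) = \<beta>" by (simp add: inverse_unique mult.commute)
  with assms show False by simp
qed

lemma mult_inverse_minus_mult: "v \<noteq> 0 \<Longrightarrow> v * (inverse v - \<beta> * v) = 1 - \<beta> * (v :: complex)\<^sup>2"
  by (simp add: algebra_simps power2_eq_square)

lemma one_minus_sigma:
  fixes \<beta> v :: complex
  assumes "v \<noteq> 0" and "1 - \<beta> * v\<^sup>2 \<noteq> 0"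
  shows "1 - sigma \<beta> v = inverse (1 - \<beta> * v\<^sup>2)"
proof -
  have "inverse v - \<beta> * v = (1 - \<beta> * v\<^sup>2) / v"
    using mult_inverse_minus_mult[OF assms(1), of \<beta>] assms(1) by (simp add: field_simps)
  then show ?thesis
    using assms by (simp add: sigma_def field_simps power2_eq_square)
qed

lemma overlap_eq:
  fixes \<beta> :: complex and v :: "nat \<Rightarrow> complex"
  assumes "\<beta> \<noteq> 0" and "M \<ge> 1"
    and "\<And>j. j \<in> {1..N} \<Longrightarrow> v j \<noteq> 0"
    and "\<And>j. j \<in> {1..N} \<Longrightarrow> inverse ((v j)\<^sup>2) \<noteq> \<beta>"
  shows "(\<Sum>n\<in>configs M N. (-\<beta>) ^ (\<Sum>j=1..M-1. j * n j) * Psi \<beta> M (map v [1..<N+1]) n)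
    = (\<Prod>j=1..N. (inverse (v j) - \<beta> * v j) ^ (M - 1)) * (\<Sum>q<M. h_complete q (\<lambda>j. sigma \<beta> (v j)) 1 N)"
proof -
  have weight: "dual_state \<beta> M M n = (-\<beta>) ^ (\<Sum>j=1..M-1. j * n j)" for n
  proof -
    have "dual_state \<beta> M M n = (-\<beta>) ^ (\<Sum>j<M. j * n j)"
      by (simp add: dual_state_def dual_weight_def power_sum)
    also have "(\<Sum>j<M. j * n j) = (\<Sum>j=1..M-1. j * n j)"
      using assms(2) by (intro sum.mono_neutral_cong_right) auto
    finally show ?thesis .
  qed
  have "inverse (v j) - \<beta> * v j \<noteq> 0" if "j \<in> {1..N}" for j
    using mult_inverse_minus_mult[of "v j" \<beta>] one_minus_mult_square_nonzero[OF assms(4)[OF that]]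
      assms(3)[OF that] by auto
  then have "pairing M N (dual_state \<beta> M M) (Psi \<beta> M (map v [1..<1 + N]))
      = (\<Prod>j\<in>{1..<1 + N}. (inverse (v j) - \<beta> * v j) ^ (M - 1)) * (\<Sum>q<M. h_complete q (\<lambda>j. sigma \<beta> (v j)) 1 N)"
    using assms by (intro pairing_dual_state_Psi) auto
  moreover have "{1..<1 + N} = {1..N}" "[1..<N + 1] = [1..<1 + N]" by auto
  ultimately show ?thesis by (simp only: pairing_def weight)
qed

lemma divdiff_last_row_poly_nodes:
  fixes \<beta> :: complex and v :: "nat \<Rightarrow> complex"
  assumes "\<beta> \<noteq> 0" and "M \<ge> 1" and "N \<ge> 1"
    and nonzero: "\<And>j. j \<in> {1..N} \<Longrightarrow> v j \<noteq> 0"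
    and regular: "\<And>j. j \<in> {1..N} \<Longrightarrow> inverse ((v j)\<^sup>2) \<noteq> \<beta>"
    and distinct: "\<And>j k. j \<in> {1..N} \<Longrightarrow> k \<in> {1..N} \<Longrightarrow> j \<noteq> k \<Longrightarrow> (v j)\<^sup>2 \<noteq> (v k)\<^sup>2"
  shows "divdiff (last_row_poly M N) (\<lambda>j. inverse (1 - \<beta> * (v j)\<^sup>2)) 1 (N - 1)
    = (-1) ^ (N - 1) * (\<Sum>q<M. h_complete q (\<lambda>j. sigma \<beta> (v j)) 1 N)"
proof -
  define s where "s = (\<lambda>j. 1 - inverse (1 - \<beta> * (v j)\<^sup>2))"
  have x: "1 - \<beta> * (v j)\<^sup>2 \<noteq> 0" if "j \<in> {1..N}" for j
    using one_minus_mult_square_nonzero[OF regular[OF that]] .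
  have "s (1 + i) \<noteq> 1" if "i \<le> N - 1" for i
    using x[of "1 + i"] that assms(3) by (simp add: s_def)
  moreover have "s (1 + i) \<noteq> s (1 + j)" if "i \<le> N - 1" "j \<le> N - 1" "i \<noteq> j" for i j
    using distinct[of "1 + i" "1 + j"] that assms(1) by (simp add: s_def)
  ultimately have "divdiff (last_row_poly M N) (\<lambda>i. 1 - s i) 1 (N - 1) = (-1) ^ (N - 1) * (\<Sum>q<M. h_complete q s 1 N)"
    by (rule divdiff_last_row_poly[OF assms(2,3)])
  moreover have "h_complete q s 1 N = h_complete q (\<lambda>j. sigma \<beta> (v j)) 1 N" for q
  proof (rule h_complete_cong)
    fix j assume "1 \<le> j" "j < 1 + N"
    then have "j \<in> {1..N}" by simp
    then have "inverse (1 - \<beta> * (v j)\<^sup>2) = 1 - sigma \<beta> (v j)"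
      using one_minus_sigma[OF nonzero x] by simp
    then show "s j = sigma \<beta> (v j)" by (simp add: s_def)
  qed
  ultimately show ?thesis by (simp add: s_def)
qed

lemma det_Vmat:
  fixes \<beta> :: complex and v :: "nat \<Rightarrow> complex"
  assumes "\<beta> \<noteq> 0" and "M \<ge> 1" and "N \<ge> 1"
    and "\<And>j. j \<in> {1..N} \<Longrightarrow> v j \<noteq> 0"
    and regular: "\<And>j. j \<in> {1..N} \<Longrightarrow> inverse ((v j)\<^sup>2) \<noteq> \<beta>"
    and "\<And>j k. j \<in> {1..N} \<Longrightarrow> k \<in> {1..N} \<Longrightarrow> j \<noteq> k \<Longrightarrow> (v j)\<^sup>2 \<noteq> (v k)\<^sup>2"
  shows "det (Vmat \<beta> M N v) = sq_vandermonde v 1 (N - 1) * (\<Sum>q<M. h_complete q (\<lambda>j. sigma \<beta> (v j)) 1 N)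
    / (\<Prod>j=1..N. (1 - \<beta> * (v j)\<^sup>2) ^ (N - 1))"
proof -
  obtain n where N: "N = Suc n" using assms(3) by (cases N) auto
  define y where "y = (\<lambda>j. inverse (1 - \<beta> * (v j)\<^sup>2))"
  define E where "E = (\<Prod>e = 1..n. (-\<beta>) ^ e)"
  define S where "S = (\<Sum>q<M. h_complete q (\<lambda>j. sigma \<beta> (v j)) 1 N)"
  define X where "X = (\<Prod>j=1..N. (1 - \<beta> * (v j)\<^sup>2) ^ n)"
  have x: "1 - \<beta> * (v j)\<^sup>2 \<noteq> 0" if "j \<in> {1..N}" for j
    using one_minus_mult_square_nonzero[OF regular[OF that]] .
  have "det (lower_factor \<beta> M N * vandermonde_with (last_row_poly M N) y 1 n)
      = det (lower_factor \<beta> M N) * det (vandermonde_with (last_row_poly M N) y 1 n)"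
    by (rule det_mult[of _ N]) (simp_all add: lower_factor_def vandermonde_with_def N)
  then have "det (Vmat \<beta> M N v) = inverse E * (vandermonde_prod y 1 n * ((-1) ^ n * S))"
    using Vmat_factor[OF assms(3), of \<beta> M v] divdiff_last_row_poly_nodes[OF assms]
    by (simp add: det_lower_factor det_vandermonde_with E_def y_def S_def N)
  also have "vandermonde_prod y 1 n = (-1) ^ n * E * sq_vandermonde v 1 n / X"
  proof -
    have "vandermonde_prod y 1 n * X = (-1) ^ n * E * sq_vandermonde v 1 n"
      using vandermonde_prod_inverse_nodes[of 1 n \<beta> v y] x unfolding X_def E_def N
      by (simp add: y_def add.commute)
    moreover have "X \<noteq> 0" using x by (simp add: X_def)
    ultimately show ?thesis by (simp add: field_simps)
  qed
  finally have "det (Vmat \<beta> M N v) = inverse E * E * ((-1) ^ n * (-1) ^ n) * sq_vandermonde v 1 n * S / X"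
    by (simp add: mult_ac)
  moreover have "E \<noteq> 0" using assms(1) by (simp add: E_def)
  ultimately show ?thesis by (simp add: S_def X_def N flip: power_mult_distrib)
qed

lemma sq_vandermonde_nonzero:
  assumes "\<And>j k. j \<in> {a..a + n} \<Longrightarrow> k \<in> {a..a + n} \<Longrightarrow> j \<noteq> k \<Longrightarrow> (v j)\<^sup>2 \<noteq> (v k)\<^sup>2"
  shows "sq_vandermonde v a n \<noteq> 0"
proof -
  have "finite {(j, k). a \<le> j \<and> j < k \<and> k \<le> a + n}"
    by (rule finite_subset[of _ "{a..a + n} \<times> {a..a + n}"]) auto
  then show ?thesis using assms by (auto simp: sq_vandermonde_def prod_zero_iff)
qed

lemma prefactor_split:
  fixes \<beta> :: complex
  assumes "M \<ge> 1" and "N \<ge> 1" and "\<And>j. j \<in> {1..N} \<Longrightarrow> v j \<noteq> 0"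
  shows "(\<Prod>j=1..N. v j ^ (N - 1) * (inverse (v j) - \<beta> * v j) ^ (M + N - 2))
    = (\<Prod>j=1..N. (inverse (v j) - \<beta> * v j) ^ (M - 1)) * (\<Prod>j=1..N. (1 - \<beta> * (v j)\<^sup>2) ^ (N - 1))"
proof -
  have "v j ^ (N - 1) * (inverse (v j) - \<beta> * v j) ^ (M + N - 2)
      = (inverse (v j) - \<beta> * v j) ^ (M - 1) * (1 - \<beta> * (v j)\<^sup>2) ^ (N - 1)" if "j \<in> {1..N}" for j
  proof -
    have "M + N - 2 = (M - 1) + (N - 1)" using assms(1,2) by simp
    then show ?thesis using mult_inverse_minus_mult[OF assms(3)[OF that]]
      by (simp add: power_add mult_ac flip: power_mult_distrib)
  qed
  then show ?thesis by (simp add: prod.distrib)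
qed

theorem mainTheorem9:
  fixes \<beta> :: complex and M N :: nat and v :: "nat \<Rightarrow> complex"
  assumes "\<beta> \<noteq> 0" and "M \<ge> 1" and "N \<ge> 1"
    and "\<And>j. j \<in> {1..N} \<Longrightarrow> v j \<noteq> 0"
    and "\<And>j. j \<in> {1..N} \<Longrightarrow> inverse ((v j)\<^sup>2) \<noteq> \<beta>"
    and "\<And>j k. j \<in> {1..N} \<Longrightarrow> k \<in> {1..N} \<Longrightarrow> j \<noteq> k \<Longrightarrow> (v j)\<^sup>2 \<noteq> (v k)\<^sup>2"
  shows "(\<Sum>n\<in>configs M N. (-\<beta>) ^ (\<Sum>j=1..M-1. j * n j) * Psi \<beta> M (map v [1..<N+1]) n)
    = (\<Prod>j=1..N. v j ^ (N - 1) * (inverse (v j) - \<beta> * v j) ^ (M + N - 2))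
      / (\<Prod>(j, k)\<in>{(j, k). 1 \<le> j \<and> j < k \<and> k \<le> N}. (v k)\<^sup>2 - (v j)\<^sup>2)
      * det (Vmat \<beta> M N v)"
proof -
  define B where "B = (\<Prod>j=1..N. (inverse (v j) - \<beta> * v j) ^ (M - 1))"
  define S where "S = (\<Sum>q<M. h_complete q (\<lambda>j. sigma \<beta> (v j)) 1 N)"
  define X where "X = (\<Prod>j=1..N. (1 - \<beta> * (v j)\<^sup>2) ^ (N - 1))"
  have "(\<Sum>n\<in>configs M N. (-\<beta>) ^ (\<Sum>j=1..M-1. j * n j) * Psi \<beta> M (map v [1..<N+1]) n) = B * S"
    unfolding B_def S_def by (rule overlap_eq[OF assms(1,2,4,5)])
  moreover have "(\<Prod>j=1..N. v j ^ (N - 1) * (inverse (v j) - \<beta> * v j) ^ (M + N - 2)) = B * X"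
    unfolding B_def X_def by (rule prefactor_split[OF assms(2-4)])
  moreover have "det (Vmat \<beta> M N v) = sq_vandermonde v 1 (N - 1) * S / X"
    unfolding S_def X_def by (rule det_Vmat[OF assms])
  moreover have "(\<Prod>(j, k)\<in>{(j, k). 1 \<le> j \<and> j < k \<and> k \<le> N}. (v k)\<^sup>2 - (v j)\<^sup>2) = sq_vandermonde v 1 (N - 1)"
    using assms(3) by (simp add: sq_vandermonde_def)
  moreover have "sq_vandermonde v 1 (N - 1) \<noteq> 0"
    using assms(3,6) by (intro sq_vandermonde_nonzero) auto
  moreover have "X \<noteq> 0"
    using one_minus_mult_square_nonzero assms(5) by (simp add: X_def)
  ultimately show ?thesis by simp
qed

end
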